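(* Let $a,b,c$ be positive integers with $c\geq b\geq a$, and suppose that at least one of the following holds: (1) $c=ka+lb$ for some integers $k,l\geq 0$; (2) $a$ divides $b$; (3) $a\leq 2$. Then there exists a tame polynomial automorphism $F$ of $\mathbb{C}^3$ with $\operatorname{mdeg} F=(a,b,c)$.
   Context: For a polynomial automorphism $F=(F_1,\ldots,F_n)$ of $\mathbb{C}^n$, its multidegree is $\operatorname{mdeg}F:=(\deg F_1,\ldots,\deg F_n)$, where $\deg$ is total degree. A map $F=(F_1,\ldots,F_n)$ is elementary if for some $j\leq n$ and some polynomial $g$ in $n-1$ variables, $F_j=X_j+g(X_1,\ldots,\widehat{X_j},\ldots,X_n)$ and $F_i=X_i$ for $i\neq j$. A polynomial automorphism is tame if it is a composition of invertible affine-linear maps and elementary maps. *)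

theory Defs
  imports Complex_Main "HOL-Library.Poly_Mapping"
begin

text \<open>Multivariate polynomials over the complex numbers: finitely supported maps from
  exponent vectors (nat \<Rightarrow>0 nat; variable X_i has index i) to coefficients.
  Polynomials in C[X_0,X_1,X_2] are those whose monomials only involve indices 0,1,2.\<close>

type_synonym mpoly = "(nat \<Rightarrow>\<^sub>0 nat) \<Rightarrow>\<^sub>0 complex"

definition Var :: "nat \<Rightarrow> mpoly" where
  "Var i = Poly_Mapping.single (Poly_Mapping.single i 1) 1"

definition Const :: "complex \<Rightarrow> mpoly" where
  "Const c = Poly_Mapping.single 0 c"

definition vars :: "mpoly \<Rightarrow> nat set" where
  "vars p = (\<Union>m\<in>Poly_Mapping.keys p. Poly_Mapping.keys m)"

text \<open>total degree of a monomial and of a polynomial (deg 0 = 0 by convention;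
  never relevant here since components of automorphisms are nonzero)\<close>
definition mon_deg :: "(nat \<Rightarrow>\<^sub>0 nat) \<Rightarrow> nat" where
  "mon_deg m = (\<Sum>i\<in>Poly_Mapping.keys m. Poly_Mapping.lookup m i)"

definition tdeg :: "mpoly \<Rightarrow> nat" where
  "tdeg p = Max (insert 0 (mon_deg ` Poly_Mapping.keys p))"

definition subst :: "(nat \<Rightarrow> mpoly) \<Rightarrow> mpoly \<Rightarrow> mpoly" where
  "subst G p = (\<Sum>m\<in>Poly_Mapping.keys p. Const (Poly_Mapping.lookup p m) * (\<Prod>i\<in>Poly_Mapping.keys m. G i ^ Poly_Mapping.lookup m i))"

text \<open>Polynomial maps of C^3 are represented as F :: nat \<Rightarrow> mpoly with components F 0, F 1, F 2
  in C[X_0,X_1,X_2]; components of index \<ge> 3 are normalised to the identity X_i.\<close>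
type_synonym pmap = "nat \<Rightarrow> mpoly"

definition pcomp :: "pmap \<Rightarrow> pmap \<Rightarrow> pmap" where
  "pcomp F G = (\<lambda>i. subst G (F i))"

definition affine_invertible :: "pmap \<Rightarrow> bool" where
  "affine_invertible F \<longleftrightarrow>
     (\<exists>(A :: nat \<Rightarrow> nat \<Rightarrow> complex) (b :: nat \<Rightarrow> complex).
        (\<exists>B :: nat \<Rightarrow> nat \<Rightarrow> complex. \<forall>i<3. \<forall>k<3.
            (\<Sum>j<3. A i j * B j k) = (if i = k then 1 else 0)) \<and>
        (\<forall>i<3. F i = (\<Sum>j<3. Const (A i j) * Var j) + Const (b i)) \<and>
        (\<forall>i\<ge>3. F i = Var i))"

definition elementary :: "pmap \<Rightarrow> bool" where
  "elementary F \<longleftrightarrow>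
     (\<exists>j<3. \<exists>g :: mpoly. vars g \<subseteq> {0,1,2} - {j} \<and>
        F j = Var j + g \<and> (\<forall>i. i \<noteq> j \<longrightarrow> F i = Var i))"

inductive tame :: "pmap \<Rightarrow> bool" where
  tame_affine: "affine_invertible F \<Longrightarrow> tame F"
| tame_elementary: "elementary F \<Longrightarrow> tame F"
| tame_comp: "tame F \<Longrightarrow> tame G \<Longrightarrow> tame (pcomp F G)"

definition mdeg :: "pmap \<Rightarrow> nat \<times> nat \<times> nat" where
  "mdeg F = (tdeg (F 0), tdeg (F 1), tdeg (F 2))"

end

theory Submission
  imports Defs "HOL-Computational_Algebra.Polynomial" "HOL-Library.Complex_Order"
begin

(* All maps are built from elementary maps X_j |-> X_j + (monomial) alone:
     (1) c = k a + l b:  (x, y, z) |-> (x + z^a, y + z^b, z + (x + z^a)^k (y + z^b)^l);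
     (2) b = m a:        (x, y, z) |-> (x + y^a, y + (x + y^a)^m, z + y^c);
     (3) a <= 2 reduces arithmetically to (1) or (2).  Every polynomial above has
   nonnegative real coefficients, so no cancellation can occur: for such polynomials
   the total degree is additive under products and is the maximum under sums.  The
   product rule is obtained through the ring homomorphism "collapse" into C[t] which
   sends a monomial of total degree d to t^d; on polynomials with nonnegative
   coefficients it preserves the degree. *)

lemma sum_keys_superset:
  fixes p :: "'a \<Rightarrow>\<^sub>0 'b::zero" and f :: "'a \<Rightarrow> 'b \<Rightarrow> 'c::comm_monoid_add"
  assumes "finite S" "Poly_Mapping.keys p \<subseteq> S" "\<And>k. f k 0 = 0"
  shows "(\<Sum>k\<in>Poly_Mapping.keys p. f k (Poly_Mapping.lookup p k)) = (\<Sum>k\<in>S. f k (Poly_Mapping.lookup p k))"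
  using assms by (intro sum.mono_neutral_left) (auto simp: in_keys_iff)

lemma prod_keys_superset:
  fixes p :: "'a \<Rightarrow>\<^sub>0 'b::zero" and f :: "'a \<Rightarrow> 'b \<Rightarrow> 'c::comm_monoid_mult"
  assumes "finite S" "Poly_Mapping.keys p \<subseteq> S" "\<And>k. f k 0 = 1"
  shows "(\<Prod>k\<in>Poly_Mapping.keys p. f k (Poly_Mapping.lookup p k)) = (\<Prod>k\<in>S. f k (Poly_Mapping.lookup p k))"
  using assms by (intro prod.mono_neutral_left) (auto simp: in_keys_iff)

lemma poly_mapping_expand:
  fixes p :: "'a \<Rightarrow>\<^sub>0 'b::comm_monoid_add"
  shows "p = (\<Sum>k\<in>Poly_Mapping.keys p. Poly_Mapping.single k (Poly_Mapping.lookup p k))"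
  by (rule poly_mapping_eqI) (auto simp: lookup_sum lookup_single in_keys_iff when_def)

lemma poly_mapping_mult_expand:
  fixes p q :: "'a::monoid_add \<Rightarrow>\<^sub>0 'b::comm_semiring_0"
  shows "p * q = (\<Sum>a\<in>Poly_Mapping.keys p. \<Sum>b\<in>Poly_Mapping.keys q.
                    Poly_Mapping.single (a + b) (Poly_Mapping.lookup p a * Poly_Mapping.lookup q b))"
proof -
  have "p * q = (\<Sum>a\<in>Poly_Mapping.keys p. Poly_Mapping.single a (Poly_Mapping.lookup p a)) *
                (\<Sum>b\<in>Poly_Mapping.keys q. Poly_Mapping.single b (Poly_Mapping.lookup q b))"
    by (simp only: poly_mapping_expand[symmetric])
  then show ?thesis by (simp add: sum_product mult_single)
qed

definition mono :: "pmap \<Rightarrow> (nat \<Rightarrow>\<^sub>0 nat) \<Rightarrow> mpoly" where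
  "mono G m = (\<Prod>i\<in>Poly_Mapping.keys m. G i ^ Poly_Mapping.lookup m i)"

lemma mono_add: "mono G (m1 + m2) = mono G m1 * mono G m2"
proof -
  let ?S = "Poly_Mapping.keys m1 \<union> Poly_Mapping.keys m2"
  have "mono G (m1 + m2) = (\<Prod>i\<in>?S. G i ^ Poly_Mapping.lookup (m1 + m2) i)"
    unfolding mono_def using keys_add[of m1 m2] by (intro prod_keys_superset) auto
  also have "\<dots> = (\<Prod>i\<in>?S. G i ^ Poly_Mapping.lookup m1 i) * (\<Prod>i\<in>?S. G i ^ Poly_Mapping.lookup m2 i)"
    by (simp add: lookup_add power_add prod.distrib)
  also have "\<dots> = mono G m1 * mono G m2"
    unfolding mono_def
    using prod_keys_superset[of ?S m1 "\<lambda>i k. G i ^ k"] prod_keys_superset[of ?S m2 "\<lambda>i k. G i ^ k"]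
    by simp
  finally show ?thesis .
qed

lemma mono_single: "mono G (Poly_Mapping.single i n) = G i ^ n"
  unfolding mono_def by (subst prod_keys_superset[of "{i}"]) auto

lemma Const_add: "Const (x + y) = Const x + Const y"
  by (simp add: Const_def single_add)

lemma subst_expand: "subst G p = (\<Sum>m\<in>Poly_Mapping.keys p. Const (Poly_Mapping.lookup p m) * mono G m)"
  by (simp add: subst_def mono_def)

lemma subst_add: "subst G (p + q) = subst G p + subst G q"
  unfolding subst_expand
  by (rule setsum_keys_plus_distrib) (simp_all add: Const_add distrib_right, simp add: Const_def)

lemma subst_single: "subst G (Poly_Mapping.single m c) = Const c * mono G m"
  unfolding subst_expand by (subst sum_keys_superset[of "{m}"]) (auto simp: Const_def)

lemma subst_Var: "subst G (Var i) = G i"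
  by (simp add: Var_def subst_single mono_single Const_def)

definition elem :: "nat \<Rightarrow> (nat \<Rightarrow>\<^sub>0 nat) \<Rightarrow> pmap" where
  "elem j m = (\<lambda>i. if i = j then Var j + Poly_Mapping.single m 1 else Var i)"

lemma tame_elem:
  assumes "j < 3" "Poly_Mapping.keys m \<subseteq> {0,1,2} - {j}"
  shows "tame (elem j m)"
proof (intro tame_elementary, unfold elementary_def, intro exI conjI)
  show "vars (Poly_Mapping.single m 1) \<subseteq> {0,1,2} - {j}"
    using assms(2) by (simp add: vars_def)
qed (use assms(1) in \<open>auto simp: elem_def\<close>)

lemma pcomp_elem: "pcomp (elem j m) G i = (if i = j then G j + mono G m else G i)"
  by (simp add: pcomp_def elem_def subst_add subst_Var subst_single Const_def)

section \<open>Polynomials with nonnegative real coefficients\<close>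

text \<open>All coefficients are nonnegative reals (in the order of HOL-Library.Complex_Order);
  this class is closed under sums and products and admits no cancellation.\<close>
definition nonneg :: "mpoly \<Rightarrow> bool" where
  "nonneg p \<longleftrightarrow> (\<forall>m. 0 \<le> Poly_Mapping.lookup p m)"

lemma nonneg_add: "nonneg p \<Longrightarrow> nonneg q \<Longrightarrow> nonneg (p + q)"
  by (simp add: nonneg_def lookup_add)

lemma nonneg_sum: "(\<And>x. x \<in> A \<Longrightarrow> nonneg (f x)) \<Longrightarrow> nonneg (\<Sum>x\<in>A. f x)"
  by (simp add: nonneg_def lookup_sum sum_nonneg)

lemma nonneg_single: "0 \<le> c \<Longrightarrow> nonneg (Poly_Mapping.single m c)"
  by (simp add: nonneg_def lookup_single when_def)

lemma nonneg_mult: "nonneg p \<Longrightarrow> nonneg q \<Longrightarrow> nonneg (p * q)"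
  unfolding poly_mapping_mult_expand[of p q]
  by (intro nonneg_sum nonneg_single mult_nonneg_nonneg) (auto simp: nonneg_def)

lemma nonneg_one: "nonneg 1"
  using nonneg_single[of 1 0] by (simp add: less_eq_complex_def)

lemma nonneg_pow: "nonneg p \<Longrightarrow> nonneg (p ^ n)"
  by (induction n) (simp_all add: nonneg_mult nonneg_one)

lemma nonneg_Var: "nonneg (Var i)"
  by (simp add: Var_def nonneg_single less_eq_complex_def)

lemma keys_add_nonneg:
  assumes "nonneg p" "nonneg q"
  shows "Poly_Mapping.keys (p + q) = Poly_Mapping.keys p \<union> Poly_Mapping.keys q"
  using assms by (auto simp: in_keys_iff lookup_add nonneg_def add_nonneg_eq_0_iff)

section \<open>Total degree\<close>

lemma tdeg_ge: "m \<in> Poly_Mapping.keys p \<Longrightarrow> mon_deg m \<le> tdeg p"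
  unfolding tdeg_def by (intro Max_ge) auto

lemma tdeg_attained:
  assumes "p \<noteq> 0"
  shows "\<exists>m\<in>Poly_Mapping.keys p. mon_deg m = tdeg p"
proof -
  have "tdeg p \<in> insert 0 (mon_deg ` Poly_Mapping.keys p)"
    unfolding tdeg_def by (rule Max_in) auto
  moreover have "Poly_Mapping.keys p \<noteq> {}"
    using assms by simp
  ultimately show ?thesis
    using tdeg_ge by fastforce
qed

lemma tdeg_single: "c \<noteq> 0 \<Longrightarrow> tdeg (Poly_Mapping.single m c) = mon_deg m"
  by (simp add: tdeg_def)

lemma tdeg_add_nonneg: "nonneg p \<Longrightarrow> nonneg q \<Longrightarrow> tdeg (p + q) = max (tdeg p) (tdeg q)"
  unfolding tdeg_def keys_add_nonneg image_Un by (subst Max_Un[symmetric]) auto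

lemma mon_deg_add: "mon_deg (m1 + m2) = mon_deg m1 + mon_deg m2"
  unfolding mon_deg_def by (rule setsum_keys_plus_distrib) (simp_all add: lookup_add)

lemma mon_deg_single: "mon_deg (Poly_Mapping.single i n) = n"
  unfolding mon_deg_def by (subst sum_keys_superset[of "{i}"]) auto

lemma Var_pow: "Var i ^ n = Poly_Mapping.single (Poly_Mapping.single i n) 1"
  by (induction n) (simp_all add: Var_def mult_single single_add[symmetric])

lemma tdeg_Var_pow: "tdeg (Var i ^ n) = n"
  by (simp add: Var_pow tdeg_single mon_deg_single)

lemma tdeg_Var: "tdeg (Var i) = 1"
  using tdeg_Var_pow[of i 1] by simp

text \<open>Identifying all variables with a single one t: a ring homomorphism into C[t]
  sending a monomial of total degree d to t^d.\<close>
definition collapse :: "mpoly \<Rightarrow> complex poly" where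
  "collapse p = (\<Sum>m\<in>Poly_Mapping.keys p. monom (Poly_Mapping.lookup p m) (mon_deg m))"

lemma collapse_add: "collapse (p + q) = collapse p + collapse q"
  unfolding collapse_def by (rule setsum_keys_plus_distrib) (simp_all add: add_monom)

lemma collapse_zero: "collapse 0 = 0"
  by (simp add: collapse_def)

lemma collapse_sum: "collapse (\<Sum>x\<in>A. f x) = (\<Sum>x\<in>A. collapse (f x))"
  by (induction A rule: infinite_finite_induct) (simp_all add: collapse_zero collapse_add)

lemma collapse_single: "collapse (Poly_Mapping.single m c) = monom c (mon_deg m)"
  unfolding collapse_def by (subst sum_keys_superset[of "{m}"]) auto

lemma collapse_mult: "collapse (p * q) = collapse p * collapse q"
proof -
  have "collapse (p * q) = (\<Sum>a\<in>Poly_Mapping.keys p. \<Sum>b\<in>Poly_Mapping.keys q.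
          monom (Poly_Mapping.lookup p a) (mon_deg a) * monom (Poly_Mapping.lookup q b) (mon_deg b))"
    unfolding poly_mapping_mult_expand[of p q]
    by (simp add: collapse_sum collapse_single mon_deg_add mult_monom)
  then show ?thesis
    by (simp add: collapse_def sum_product)
qed

text \<open>The key point: for nonnegative coefficients the top coefficient of the collapse
  is a sum of nonnegative numbers, one of which is positive, so collapsing preserves
  the degree.\<close>
lemma collapse_top_coeff:
  assumes "nonneg p" "p \<noteq> 0"
  shows "coeff (collapse p) (tdeg p) \<noteq> 0"
proof -
  obtain m0 where m0: "m0 \<in> Poly_Mapping.keys p" "mon_deg m0 = tdeg p"
    using tdeg_attained assms(2) by blast
  let ?f = "\<lambda>m. if mon_deg m = tdeg p then Poly_Mapping.lookup p m else 0"
  have top_coeff: "coeff (collapse p) (tdeg p) = (\<Sum>m\<in>Poly_Mapping.keys p. ?f m)"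
    by (simp add: collapse_def coeff_sum coeff_monom)
  have "0 < Poly_Mapping.lookup p m0"
    using assms(1) m0(1) by (simp add: nonneg_def in_keys_iff order_le_neq_trans)
  also have "\<dots> \<le> (\<Sum>m\<in>Poly_Mapping.keys p. ?f m)"
    using assms(1) m0 member_le_sum[of m0 "Poly_Mapping.keys p" ?f] by (simp add: nonneg_def)
  finally show ?thesis using top_coeff by auto
qed

lemma degree_collapse:
  assumes "nonneg p"
  shows "degree (collapse p) = tdeg p"
proof (cases "p = 0")
  case False
  have "degree (collapse p) \<le> tdeg p"
    by (rule degree_le) (auto simp: collapse_def coeff_sum coeff_monom intro!: sum.neutral dest: tdeg_ge)
  then show ?thesis using le_degree[OF collapse_top_coeff[OF assms False]] by simp
qed (simp add: collapse_zero tdeg_def)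

lemma tdeg_mult_nonneg:
  assumes "nonneg p" "nonneg q" "p \<noteq> 0" "q \<noteq> 0"
  shows "tdeg (p * q) = tdeg p + tdeg q"
proof -
  have "collapse p \<noteq> 0" "collapse q \<noteq> 0"
    using collapse_top_coeff assms by force+
  then have "degree (collapse (p * q)) = degree (collapse p) + degree (collapse q)"
    by (simp add: collapse_mult degree_mult_eq)
  then show ?thesis using assms by (simp add: degree_collapse nonneg_mult)
qed

lemma tdeg_pow_nonneg: "nonneg p \<Longrightarrow> p \<noteq> 0 \<Longrightarrow> tdeg (p ^ n) = n * tdeg p"
proof (induction n)
  case 0
  then show ?case by (simp add: tdeg_def mon_deg_def)
next
  case (Suc n)
  then show ?case by (simp add: tdeg_mult_nonneg nonneg_pow)
qed

lemma Var_plus_Var_pow: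
  assumes "0 < n"
  shows "nonneg (Var i + Var j ^ n)" "tdeg (Var i + Var j ^ n) = n" "Var i + Var j ^ n \<noteq> 0"
proof -
  show "nonneg (Var i + Var j ^ n)"
    by (intro nonneg_add nonneg_pow nonneg_Var)
  show deg: "tdeg (Var i + Var j ^ n) = n"
    using assms by (simp add: tdeg_add_nonneg nonneg_Var nonneg_pow tdeg_Var tdeg_Var_pow)
  show "Var i + Var j ^ n \<noteq> 0"
    using deg assms by (auto simp: tdeg_def)
qed

lemma tame_mdeg_combination:
  assumes "0 < a" "0 < b" "0 < k * a + l * b"
  shows "\<exists>F. tame F \<and> mdeg F = (a, b, k * a + l * b)"
proof -
  define G where "G = pcomp (elem 0 (Poly_Mapping.single 2 a)) (elem 1 (Poly_Mapping.single 2 b))"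
  define F where "F = pcomp (elem 2 (Poly_Mapping.single 0 k + Poly_Mapping.single 1 l)) G"
  have keys_kl: "Poly_Mapping.keys (Poly_Mapping.single (0::nat) k + Poly_Mapping.single 1 l) \<subseteq> {0, 1}"
    by (rule order_trans[OF keys_add]) auto
  have "tame F"
    unfolding F_def G_def using keys_kl by (intro tame_comp tame_elem) auto
  have G0: "G 0 = Var 0 + Var 2 ^ a" and G1: "G 1 = Var 1 + Var 2 ^ b" and G2: "G 2 = Var 2"
    unfolding G_def pcomp_elem by (simp_all add: mono_single elem_def Var_pow)
  have F: "F 0 = G 0" "F 1 = G 1" "F 2 = Var 2 + G 0 ^ k * G 1 ^ l"
    by (simp_all add: F_def pcomp_elem mono_add mono_single G2)
  have "tdeg (F 2) = max (tdeg (Var 2)) (tdeg (G 0 ^ k * G 1 ^ l))"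
    unfolding F G0 G1 using Var_plus_Var_pow assms
    by (intro tdeg_add_nonneg nonneg_Var nonneg_mult nonneg_pow) auto
  also have "tdeg (G 0 ^ k * G 1 ^ l) = k * a + l * b"
    unfolding G0 G1 using Var_plus_Var_pow assms
    by (simp add: tdeg_mult_nonneg tdeg_pow_nonneg nonneg_pow)
  also have "max (tdeg (Var 2)) (k * a + l * b) = k * a + l * b"
    using assms(3) by (simp add: tdeg_Var max_absorb2 Suc_leI del: add_gr_0)
  finally show ?thesis
    using \<open>tame F\<close> F Var_plus_Var_pow assms unfolding G0 G1 by (auto simp: mdeg_def)
qed

lemma tame_mdeg_multiple:
  assumes "0 < a" "0 < m" "0 < c"
  shows "\<exists>F. tame F \<and> mdeg F = (a, m * a, c)"
proof -
  define A where "A = pcomp (elem 0 (Poly_Mapping.single 1 a)) (elem 2 (Poly_Mapping.single 1 c))"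
  define F where "F = pcomp (elem 1 (Poly_Mapping.single 0 m)) A"
  have "tame F"
    unfolding F_def A_def by (intro tame_comp tame_elem) auto
  have A0: "A 0 = Var 0 + Var 1 ^ a" and A1: "A 1 = Var 1" and A2: "A 2 = Var 2 + Var 1 ^ c"
    unfolding A_def pcomp_elem by (simp_all add: mono_single elem_def Var_pow)
  have F: "F 0 = A 0" "F 1 = A 1 + A 0 ^ m" "F 2 = A 2"
    by (simp_all add: F_def pcomp_elem mono_single)
  have "tdeg (F 1) = m * a"
    unfolding F A0 A1 using Var_plus_Var_pow assms
    by (simp add: tdeg_add_nonneg tdeg_pow_nonneg nonneg_Var nonneg_pow tdeg_Var)
  then show ?thesis
    using \<open>tame F\<close> F Var_plus_Var_pow assms unfolding A0 A2 by (auto simp: mdeg_def)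
qed

text \<open>1 divides b; for a = 2 either a divides b, or b is odd and then c or c - b is
  even, so c = k a or c = k a + b.\<close>
lemma small_first_degree:
  fixes a b c :: nat
  assumes "0 < a" "a \<le> 2" "b \<le> c"
  shows "a dvd b \<or> (\<exists>k l. c = k * a + l * b)"
proof (cases "a = 1 \<or> even b")
  case True
  moreover have "a = 1 \<or> a = 2"
    using assms(1,2) by auto
  ultimately show ?thesis by auto
next
  case False
  then have "a = 2" "odd b" using assms by auto
  show ?thesis
  proof (cases "even c")
    case True
    then have "c = (c div 2) * a + 0 * b" using \<open>a = 2\<close> by simp
    then show ?thesis by blast
  next
    case False
    then have "c = ((c - b) div 2) * a + 1 * b"
      using \<open>a = 2\<close> \<open>odd b\<close> assms(3) by (simp add: dvd_minus_add)
    then show ?thesis by blast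
  qed
qed

theorem fact1:
  fixes a b c :: nat
  assumes "0 < a" and "a \<le> b" and "b \<le> c"
    and "(\<exists>k l :: nat. c = k * a + l * b) \<or> a dvd b \<or> a \<le> 2"
  shows "\<exists>F. tame F \<and> mdeg F = (a, b, c)"
proof -
  have "0 < b" "0 < c" using assms(1-3) by auto
  have "(\<exists>k l. c = k * a + l * b) \<or> a dvd b"
    using assms(4) small_first_degree[OF assms(1) _ assms(3)] by blast
  then show ?thesis
  proof
    assume "\<exists>k l. c = k * a + l * b"
    then obtain k l where "c = k * a + l * b" by blast
    then show ?thesis using tame_mdeg_combination[OF assms(1) \<open>0 < b\<close>] \<open>0 < c\<close> by simp
  next
    assume "a dvd b"
    then obtain m where "b = m * a" by (metis dvdE mult.commute)
    then show ?thesis using tame_mdeg_multiple[OF assms(1) _ \<open>0 < c\<close>] \<open>0 < b\<close> by simp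
  qed
qed

end
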